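(* Let $T_1,T_2$ be rooted trees on leaf set $[n]$. The following three numbers are equal: (1) the dimension of the cone $K_{T_1}+K_{T_2}\subseteq\mathbb{R}^{\binom{[n]}{2}}$; (2) the rank of the graphic matroid of the clade graph $G_{T_1,T_2}$, i.e. its number of vertices minus its number of connected components; (3) the cardinality $|\mathrm{clade}(T_1)\cup\mathrm{clade}(T_2)|$.
   Context: A rooted tree on leaf set $[n]$ has leaves labeled bijectively by $[n]$ and internal vertices each with at least two children. A clade of $T$ is the set of leaves below an internal vertex; $\mathrm{clade}(T)$ is the set of clades (including $[n]$). For $S\subseteq[n]$, $c_T(S)$ denotes the smallest clade of $T$ containing $S$. The clade graph $G_{T_1,T_2}$ is the bipartite multigraph whose vertex set is the disjoint union of $\mathrm{clade}(T_1)$ and $\mathrm{clade}(T_2)$ and which has, for each pair $1\le i<j\le n$, an edge $e_{ij}$ joining $c_{T_1}(\{i,j\})$ to $c_{T_2}(\{i,j\})$. An ultrametric is $\delta\in\mathbb{R}^{\binom{[n]}{2}}$ with $\delta_{uv}\le\max\{\delta_{uw},\delta_{vw}\}$ for all distinct $u,v,w$. $K_T$ is the closed cone of ultrametrics with topology $T$: the set of $\delta$ such that there are real weights on the internal vertices of $T$, weakly increasing along every path toward the root, with $\delta_{uv}$ equal to the weight of the most recent common ancestor (internal vertex on the $u$–$v$ path closest to the root) of $u$ and $v$. $K_{T_1}+K_{T_2}$ is the Minkowski sum. *)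

theory Defs
  imports Complex_Main "HOL-Library.Function_Algebras"
begin

text \<open>A rooted tree on leaf set [n] (internal vertices with at
least two children) is represented by its set of clades: a laminar family of subsets of
[n], each of size at least 2, containing [n].  This is in bijection with such trees
(up to isomorphism fixing the leaf labels).\<close>

definition rooted_tree :: "nat \<Rightarrow> nat set set \<Rightarrow> bool" where
  "rooted_tree n H \<longleftrightarrow>
     {1..n} \<in> H \<and>
     (\<forall>C\<in>H. C \<subseteq> {1..n} \<and> 2 \<le> card C) \<and>
     (\<forall>C\<in>H. \<forall>D\<in>H. C \<subseteq> D \<or> D \<subseteq> C \<or> C \<inter> D = {})"

definition clade_of :: "nat set set \<Rightarrow> nat set \<Rightarrow> nat set" where
  "clade_of H S = (THE C. C \<in> H \<and> S \<subseteq> C \<and> (\<forall>D\<in>H. S \<subseteq> D \<longrightarrow> C \<subseteq> D))"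

definition pairs :: "nat \<Rightarrow> nat set set" where
  "pairs n = {P. P \<subseteq> {1..n} \<and> card P = 2}"

text \<open>Vectors of R^(binom [n] 2) are functions on 2-subsets vanishing outside pairs n.
K_T: weights w on internal vertices (= clades), weakly increasing towards the root
(= along inclusion), delta_{uv} = weight of the mrca of u,v, i.e. of the clade c_T({u,v}).\<close>
definition ultra_cone :: "nat \<Rightarrow> nat set set \<Rightarrow> (nat set \<Rightarrow> real) set" where
  "ultra_cone n H = {\<delta>. (\<forall>P. P \<notin> pairs n \<longrightarrow> \<delta> P = 0) \<and>
     (\<exists>w :: nat set \<Rightarrow> real.
        (\<forall>C\<in>H. \<forall>D\<in>H. C \<subseteq> D \<longrightarrow> w C \<le> w D) \<and>
        (\<forall>u\<in>{1..n}. \<forall>v\<in>{1..n}. u \<noteq> v \<longrightarrow> \<delta> {u, v} = w (clade_of H {u, v})))}"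

definition minkowski_sum :: "('a \<Rightarrow> real) set \<Rightarrow> ('a \<Rightarrow> real) set \<Rightarrow> ('a \<Rightarrow> real) set" where
  "minkowski_sum A B = {a + b | a b. a \<in> A \<and> b \<in> B}"

text \<open>Dimension of a cone (containing 0) = dimension of its linear span, in the real vector
space of real-valued functions with pointwise operations.\<close>
definition cone_dim :: "('a \<Rightarrow> real) set \<Rightarrow> nat" where
  "cone_dim K = vector_space.dim (\<lambda>(c::real) f x. c * f x) K"

definition clade_graph_vertices :: "nat set set \<Rightarrow> nat set set \<Rightarrow> (nat set + nat set) set" where
  "clade_graph_vertices H1 H2 = Inl ` H1 \<union> Inr ` H2"

definition clade_graph_edges ::
  "nat \<Rightarrow> nat set set \<Rightarrow> nat set set \<Rightarrow> ((nat set + nat set) \<times> (nat set + nat set)) set" where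
  "clade_graph_edges n H1 H2 =
     {(Inl (clade_of H1 {i, j}), Inr (clade_of H2 {i, j})) | i j. 1 \<le> i \<and> i < j \<and> j \<le> n}"

definition num_components :: "'v set \<Rightarrow> ('v \<times> 'v) set \<Rightarrow> nat" where
  "num_components V E = card (V // (E \<union> E\<inverse>)\<^sup>*)"

definition graphic_rank :: "'v set \<Rightarrow> ('v \<times> 'v) set \<Rightarrow> nat" where
  "graphic_rank V E = card V - num_components V E"

end

(*
  The cone K_T is spanned by the vectors e_C, C a clade of T, where e_C is the indicator of the
  pairs {i, j} with c_T({i, j}) = C. Hence K_T1 + K_T2 spans the same space as all e_C for the
  clades of both trees. Indexing coordinates by pairs, i.e. by the edges of the clade graph,
  these are exactly the (unsigned) incidence vectors of its vertices; as the graph is bipartite,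
  they span a space of dimension #vertices - #components, a basis being obtained by dropping one
  vertex per component. Finally, the components correspond to the clades common to both trees:
  such a clade bounds every clade in its component, and in each component the maximal clade of
  T1 and the maximal clade of T2 coincide. So the rank is |clade(T1)| + |clade(T2)| minus
  |clade(T1) \<inter> clade(T2)|, which is |clade(T1) \<union> clade(T2)|.
*)

theory Submission
  imports Defs
begin

lemma sum_fun_apply: "sum f A x = (\<Sum>a\<in>A. f a x)"
  by (induction A rule: infinite_finite_induct) auto

lemma rtrancl_map:
  assumes "\<And>x y. (x, y) \<in> r \<Longrightarrow> (f x, f y) \<in> s" and "(x, y) \<in> r\<^sup>*"
  shows "(f x, f y) \<in> s\<^sup>*"
  using assms(2) by induction (auto intro: rtrancl_into_rtrancl assms(1))

lemma symcl_rtrancl_invariant: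
  assumes "\<And>x y. (x, y) \<in> E \<Longrightarrow> f x = f y" and "(x, y) \<in> (E \<union> E\<inverse>)\<^sup>*"
  shows "f x = f y"
  using assms(2) by induction (auto dest: assms(1))

lemma (in vector_space) independent_image_if_scalars_zero:
  assumes fin: "finite I"
    and scalars_zero: "\<And>c i. (\<Sum>j\<in>I. c j *s f j) = 0 \<Longrightarrow> i \<in> I \<Longrightarrow> c i = 0"
  shows "inj_on f I" and "independent (f ` I)"
proof -
  show inj: "inj_on f I"
  proof (rule inj_onI, rule ccontr)
    fix i j assume ij: "i \<in> I" "j \<in> I" "f i = f j" "i \<noteq> j"
    let ?c = "\<lambda>k. (if k = i then 1 else 0) - (if k = j then 1 else 0)"
    have "?c k *s f k = (if k = i then f k else 0) - (if k = j then f k else 0)" for k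
      by (simp add: scale_left_diff_distrib)
    then have "(\<Sum>k\<in>I. ?c k *s f k) = 0"
      using ij fin by (simp add: sum_subtractf)
    from scalars_zero[OF this ij(1)] show False using ij(4) by simp
  qed
  show "independent (f ` I)"
  proof (rule independent_if_scalars_zero)
    fix g x assume sum0: "(\<Sum>x\<in>f ` I. g x *s x) = 0" and x: "x \<in> f ` I"
    then obtain i where "i \<in> I" "x = f i" by blast
    moreover have "(\<Sum>j\<in>I. g (f j) *s f j) = 0" using sum0 by (simp add: sum.reindex[OF inj])
    ultimately show "g x = 0" using scalars_zero[of "g \<circ> f"] by simp
  qed (use fin in simp)
qed

interpretation fun_space: vector_space "\<lambda>(c::real) (f::'a \<Rightarrow> real) x. c * f x"
  by unfold_locales (auto simp: algebra_simps fun_eq_iff)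

lemma span_minkowski_sum:
  assumes "0 \<in> A" and "0 \<in> B"
  shows "fun_space.span (minkowski_sum A B) = fun_space.span (A \<union> B)"
proof (rule fun_space.span_eq[THEN iffD2], intro conjI subsetI)
  fix x assume "x \<in> minkowski_sum A B"
  then obtain a b where "x = a + b" "a \<in> A" "b \<in> B"
    unfolding minkowski_sum_def by blast
  then show "x \<in> fun_space.span (A \<union> B)"
    by (simp add: fun_space.span_add fun_space.span_base)
next
  fix x assume "x \<in> A \<union> B"
  then have "x \<in> minkowski_sum A B"
  proof
    assume "x \<in> A"
    then show ?thesis unfolding minkowski_sum_def
      using assms(2) by (intro CollectI exI[of _ x] exI[of _ 0]) simp
  next
    assume "x \<in> B"
    then show ?thesis unfolding minkowski_sum_def
      using assms(1) by (intro CollectI exI[of _ 0] exI[of _ x]) simp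
  qed
  then show "x \<in> fun_space.span (minkowski_sum A B)" by (rule fun_space.span_base)
qed

section \<open>Clades\<close>

lemma pairs_iff: "P \<in> pairs n \<longleftrightarrow> (\<exists>i\<in>{1..n}. \<exists>j\<in>{1..n}. i \<noteq> j \<and> P = {i, j})"
  unfolding pairs_def card_2_iff by blast

lemma doubleton_in_pairs: "i \<in> {1..n} \<Longrightarrow> j \<in> {1..n} \<Longrightarrow> i \<noteq> j \<Longrightarrow> {i, j} \<in> pairs n"
  by (simp add: pairs_def)

lemma pairs_nonempty: "P \<in> pairs n \<Longrightarrow> P \<noteq> {}"
  and pairs_subset: "P \<in> pairs n \<Longrightarrow> P \<subseteq> {1..n}"
  unfolding pairs_def by auto

locale clade_tree =
  fixes n :: nat and H :: "nat set set"
  assumes rooted_tree: "rooted_tree n H"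
begin

lemma full_clade: "{1..n} \<in> H"
  and clade_subset: "C \<in> H \<Longrightarrow> C \<subseteq> {1..n}"
  and two_le_card_clade: "C \<in> H \<Longrightarrow> 2 \<le> card C"
  and clades_laminar: "C \<in> H \<Longrightarrow> D \<in> H \<Longrightarrow> x \<in> C \<Longrightarrow> x \<in> D \<Longrightarrow> C \<subseteq> D \<or> D \<subseteq> C"
  using rooted_tree unfolding rooted_tree_def by blast+

lemma finite_clades: "finite H"
  using clade_subset by (intro finite_subset[of H "Pow {1..n}"]) auto

lemma clade_of:
  assumes "S \<noteq> {}" and "S \<subseteq> {1..n}"
  shows clade_of_in: "clade_of H S \<in> H"
    and subset_clade_of: "S \<subseteq> clade_of H S"
    and clade_of_least: "\<And>D. D \<in> H \<Longrightarrow> S \<subseteq> D \<Longrightarrow> clade_of H S \<subseteq> D"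
proof -
  obtain C where C: "C \<in> H" "S \<subseteq> C" and minimal: "\<forall>D\<in>{D\<in>H. S \<subseteq> D}. D \<subseteq> C \<longrightarrow> C = D"
    using finite_has_minimal[of "{D\<in>H. S \<subseteq> D}"] finite_clades full_clade assms(2) by auto
  have least: "C \<subseteq> D" if "D \<in> H" "S \<subseteq> D" for D
    using clades_laminar[OF C(1) that(1)] C(2) that minimal assms(1) by blast
  have "clade_of H S = C"
    unfolding clade_of_def by (rule the_equality) (use C least in auto)
  then show "clade_of H S \<in> H" "S \<subseteq> clade_of H S" "\<And>D. D \<in> H \<Longrightarrow> S \<subseteq> D \<Longrightarrow> clade_of H S \<subseteq> D"
    using C least by auto
qed

lemma clade_of_pairs:
  assumes "P \<in> pairs n"
  shows "clade_of H P \<in> H" "P \<subseteq> clade_of H P" "\<And>D. D \<in> H \<Longrightarrow> P \<subseteq> D \<Longrightarrow> clade_of H P \<subseteq> D"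
  using clade_of[OF pairs_nonempty[OF assms] pairs_subset[OF assms]] by auto

lemma clade_of_subset_iff:
  assumes "S \<noteq> {}" "S \<subseteq> {1..n}" "D \<in> H"
  shows "clade_of H S \<subseteq> D \<longleftrightarrow> S \<subseteq> D"
  using clade_of[OF assms(1,2)] assms(3) by blast

lemma clade_eq_clade_of_pair:
  assumes C: "C \<in> H"
  obtains P where "P \<in> pairs n" "clade_of H P = C"
proof -
  have "finite C" "C \<subseteq> {1..n}"
    using clade_subset[OF C] finite_subset by auto
  obtain i where i: "i \<in> C"
    using two_le_card_clade[OF C] by fastforce
  have "C \<noteq> {i}" using two_le_card_clade[OF C] by auto
  then have "C - {i} \<noteq> {}" using i by blast
  let ?Xs = "(\<lambda>j. clade_of H {i, j}) ` (C - {i})"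
  obtain X where "X \<in> ?Xs" and maximal: "\<forall>Y\<in>?Xs. X \<subseteq> Y \<longrightarrow> X = Y"
    using finite_has_maximal[of ?Xs] \<open>finite C\<close> \<open>C - {i} \<noteq> {}\<close> by auto
  then obtain j where j: "j \<in> C" "j \<noteq> i" and X: "X = clade_of H {i, j}" by blast
  have ij: "i \<in> {1..n}" "j \<in> {1..n}" using i j \<open>C \<subseteq> {1..n}\<close> by auto
  have "X = C"
  proof (rule ccontr)
    have "X \<subseteq> C" unfolding X using clade_of_least[of "{i, j}" C] ij i j C by auto
    moreover assume "X \<noteq> C"
    ultimately obtain k where k: "k \<in> C" "k \<notin> X" by blast
    then have "k \<noteq> i" "k \<in> {1..n}"
      using subset_clade_of[of "{i, j}"] ij \<open>C \<subseteq> {1..n}\<close> X by auto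
    let ?Y = "clade_of H {i, k}"
    have Y: "?Y \<in> H" "i \<in> ?Y" "k \<in> ?Y"
      using clade_of[of "{i, k}"] ij \<open>k \<in> {1..n}\<close> by auto
    have "X \<in> H" "i \<in> X" using clade_of[of "{i, j}"] ij X by auto
    then have "X \<subseteq> ?Y"
      using clades_laminar[OF _ Y(1) _ Y(2)] Y(3) k(2) by blast
    moreover have "?Y \<in> ?Xs" using k \<open>k \<noteq> i\<close> by blast
    ultimately show False using maximal Y(3) k(2) by blast
  qed
  moreover have "{i, j} \<in> pairs n" using ij j(2) pairs_iff by blast
  ultimately show thesis using that X by blast
qed

lemma clade_of_pair_ultrametric:
  assumes "i \<in> {1..n}" "j \<in> {1..n}" "k \<in> {1..n}"
  shows "clade_of H {i, j} \<subseteq> clade_of H {i, k} \<or> clade_of H {i, j} \<subseteq> clade_of H {j, k}"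
proof -
  have "clade_of H {i, k} \<subseteq> clade_of H {j, k} \<or> clade_of H {j, k} \<subseteq> clade_of H {i, k}"
    using clades_laminar[of "clade_of H {i, k}" "clade_of H {j, k}" k] clade_of[of "{i, k}"]
      clade_of[of "{j, k}"] assms by auto
  then show ?thesis
    using clade_of_subset_iff[of "{i, j}"] clade_of[of "{i, k}"] clade_of[of "{j, k}"] assms by auto
qed

lemma clade_of_pair_through_leaf:
  assumes P: "P \<in> pairs n" and k: "k \<in> clade_of H P"
  obtains l where "l \<in> P" "clade_of H {l, k} = clade_of H P"
proof -
  obtain i j where ij: "i \<in> {1..n}" "j \<in> {1..n}" "P = {i, j}"
    using P unfolding pairs_iff by blast
  have "k \<in> {1..n}" using k clade_of_pairs(1)[OF P] clade_subset by blast
  then have "clade_of H {i, k} \<subseteq> clade_of H P" "clade_of H {j, k} \<subseteq> clade_of H P"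
    using clade_of_subset_iff[of _ "clade_of H P"] clade_of_pairs(1,2)[OF P] ij k by auto
  then show thesis
    using clade_of_pair_ultrametric[OF ij(1,2) \<open>k \<in> {1..n}\<close>] ij(3) that by auto
qed

end

section \<open>Components of the clade graph\<close>

definition vertex_clade :: "'a + 'a \<Rightarrow> 'a" where
  "vertex_clade v = (case v of Inl X \<Rightarrow> X | Inr X \<Rightarrow> X)"

definition swap_side :: "'a + 'b \<Rightarrow> 'b + 'a" where
  "swap_side v = (case v of Inl X \<Rightarrow> Inr X | Inr X \<Rightarrow> Inl X)"

lemma vertex_clade_simps [simp]: "vertex_clade (Inl X) = X" "vertex_clade (Inr X) = X"
  and swap_side_simps [simp]: "swap_side (Inl X) = Inr X" "swap_side (Inr X) = Inl X"
  by (simp_all add: vertex_clade_def swap_side_def)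

lemma clade_graph_edges_eq:
  "clade_graph_edges n H1 H2 = (\<lambda>P. (Inl (clade_of H1 P), Inr (clade_of H2 P))) ` pairs n"
proof (intro equalityI subsetI)
  fix e assume "e \<in> clade_graph_edges n H1 H2"
  then obtain i j where e: "e = (Inl (clade_of H1 {i, j}), Inr (clade_of H2 {i, j}))"
    and ij: "1 \<le> i" "i < j" "j \<le> n"
    unfolding clade_graph_edges_def by blast
  have "{i, j} \<in> pairs n" using ij by (intro doubleton_in_pairs) auto
  then show "e \<in> (\<lambda>P. (Inl (clade_of H1 P), Inr (clade_of H2 P))) ` pairs n"
    unfolding e by (rule imageI)
next
  fix e :: "(nat set + nat set) \<times> (nat set + nat set)"
  assume "e \<in> (\<lambda>P. (Inl (clade_of H1 P), Inr (clade_of H2 P))) ` pairs n"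
  then obtain P where P: "P \<in> pairs n" and e: "e = (Inl (clade_of H1 P), Inr (clade_of H2 P))"
    by blast
  from P obtain i j where ij: "i \<in> {1..n}" "j \<in> {1..n}" "i \<noteq> j" "P = {i, j}"
    unfolding pairs_iff by blast
  show "e \<in> clade_graph_edges n H1 H2"
  proof (cases "i < j")
    case True
    then show ?thesis using ij e unfolding clade_graph_edges_def by auto
  next
    case False
    then have "j < i" "P = {j, i}" using ij(3,4) by auto
    then show ?thesis using ij e unfolding clade_graph_edges_def by auto
  qed
qed

abbreviation clade_graph_conn :: "nat \<Rightarrow> nat set set \<Rightarrow> nat set set \<Rightarrow> (nat set + nat set) rel" where
  "clade_graph_conn n H1 H2 \<equiv> (clade_graph_edges n H1 H2 \<union> (clade_graph_edges n H1 H2)\<inverse>)\<^sup>*"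

locale two_clade_trees = T1: clade_tree n H1 + T2: clade_tree n H2 for n H1 H2
begin

abbreviation "V \<equiv> clade_graph_vertices H1 H2"
abbreviation "E \<equiv> clade_graph_edges n H1 H2"
abbreviation "conn \<equiv> clade_graph_conn n H1 H2"

lemma edgeI: "P \<in> pairs n \<Longrightarrow> (Inl (clade_of H1 P), Inr (clade_of H2 P)) \<in> E"
  unfolding clade_graph_edges_eq by blast

lemma edgeE:
  assumes "(x, y) \<in> E"
  obtains P where "P \<in> pairs n" "x = Inl (clade_of H1 P)" "y = Inr (clade_of H2 P)"
  using assms unfolding clade_graph_edges_eq by blast

lemma conn_sym: "(x, y) \<in> conn \<Longrightarrow> (y, x) \<in> conn"
  by (meson sym_Un_converse sym_rtrancl symD)

lemma conn_trans: "(x, y) \<in> conn \<Longrightarrow> (y, z) \<in> conn \<Longrightarrow> (x, z) \<in> conn"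
  by (rule rtrancl_trans)

lemma conn_Image_eq: "(x, y) \<in> conn \<Longrightarrow> conn `` {x} = conn `` {y}"
  using conn_trans conn_sym by blast

lemma conn_edge: "P \<in> pairs n \<Longrightarrow> (Inl (clade_of H1 P), Inr (clade_of H2 P)) \<in> conn"
  by (blast intro: edgeI)

lemma conn_in_vertices:
  assumes "(x, y) \<in> conn" and "x \<in> V"
  shows "y \<in> V"
proof -
  have "x \<in> V \<longleftrightarrow> y \<in> V" if "(x, y) \<in> E" for x y
    using that T1.clade_of_pairs(1) T2.clade_of_pairs(1)
    by (elim edgeE) (simp add: clade_graph_vertices_def)
  then show ?thesis using symcl_rtrancl_invariant[OF _ assms(1), of "\<lambda>v. v \<in> V"] assms(2) by blast
qed

lemma vertex_has_edge:
  assumes "v \<in> V"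
  obtains P where "P \<in> pairs n" "v = Inl (clade_of H1 P) \<or> v = Inr (clade_of H2 P)"
  using assms T1.clade_eq_clade_of_pair T2.clade_eq_clade_of_pair
  unfolding clade_graph_vertices_def by blast

lemma conn_subset_common_clade:
  assumes "A \<in> H1" "A \<in> H2" and "(x, y) \<in> conn"
  shows "vertex_clade x \<subseteq> A \<longleftrightarrow> vertex_clade y \<subseteq> A"
proof (rule symcl_rtrancl_invariant[OF _ assms(3)])
  fix x y assume "(x, y) \<in> E"
  then show "(vertex_clade x \<subseteq> A) = (vertex_clade y \<subseteq> A)"
    using T1.clade_of_subset_iff[OF pairs_nonempty pairs_subset assms(1)]
      T2.clade_of_subset_iff[OF pairs_nonempty pairs_subset assms(2)]
    by (elim edgeE) simp
qed

lemma common_clades_conn_eq: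
  assumes "A \<in> H1" "A \<in> H2" "B \<in> H1" "B \<in> H2" and "(x, y) \<in> conn"
    and "vertex_clade x = A" "vertex_clade y = B"
  shows "A = B"
  using conn_subset_common_clade[OF assms(1,2,5)] conn_subset_common_clade[OF assms(3,4) conn_sym[OF assms(5)]]
    assms(6,7) by blast

lemma conn_swap_side:
  assumes "(x, y) \<in> conn"
  shows "(swap_side x, swap_side y) \<in> clade_graph_conn n H2 H1"
proof (rule rtrancl_map[OF _ assms])
  have swapped_edge: "(Inl (clade_of H2 P), Inr (clade_of H1 P)) \<in> clade_graph_edges n H2 H1"
    if "P \<in> pairs n" for P
    using that unfolding clade_graph_edges_eq by blast
  fix x y assume "(x, y) \<in> E \<union> E\<inverse>"
  then show "(swap_side x, swap_side y) \<in> clade_graph_edges n H2 H1 \<union> (clade_graph_edges n H2 H1)\<inverse>"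
    by (auto elim!: edgeE dest: swapped_edge)
qed

lemma swap_trees: "two_clade_trees n H2 H1"
  by unfold_locales

lemma maximal_clade_bounds_component:
  assumes Z: "Z \<in> H1"
    and maximal: "\<And>X. X \<in> H1 \<Longrightarrow> (Inl Z, Inl X) \<in> conn \<Longrightarrow> Z \<subseteq> X \<Longrightarrow> X = Z"
    and "(Inl Z, y) \<in> conn"
  shows "vertex_clade y \<subseteq> Z"
  using assms(3)
proof (induction rule: rtrancl_induct)
  case base
  show ?case by simp
next
  case (step y z)
  from step.hyps(2) show ?case
  proof
    assume "(y, z) \<in> E"
    then obtain P where P: "P \<in> pairs n" "y = Inl (clade_of H1 P)" "z = Inr (clade_of H2 P)"
      by (rule edgeE)
    have "P \<subseteq> Z" using step.IH P T1.clade_of_pairs(2) by auto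
    show ?case
    proof (rule ccontr)
      \<comment> \<open>a leaf of clade_of H2 P outside Z would yield a larger clade of T1 in the component\<close>
      assume "\<not> ?case"
      then obtain k where k: "k \<in> clade_of H2 P" "k \<notin> Z" using P(3) by auto
      have "k \<in> {1..n}" using k T2.clade_of_pairs(1) T2.clade_subset P(1) by blast
      obtain l where l: "l \<in> P" "clade_of H2 {l, k} = clade_of H2 P"
        using T2.clade_of_pair_through_leaf[OF P(1) k(1)] .
      have "l \<in> Z" "l \<noteq> k" using l(1) \<open>P \<subseteq> Z\<close> k(2) by auto
      then have lk: "{l, k} \<in> pairs n"
        using l(1) P(1) \<open>k \<in> {1..n}\<close> pairs_subset pairs_iff by blast
      let ?X = "clade_of H1 {l, k}"
      have X: "?X \<in> H1" "l \<in> ?X" "k \<in> ?X" using T1.clade_of_pairs[OF lk] by auto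
      have "(Inl Z, z) \<in> conn" using step.hyps by (rule rtrancl_into_rtrancl)
      then have "(Inl Z, Inl ?X) \<in> conn"
        using conn_trans[OF _ conn_sym[OF conn_edge[OF lk]]] P(3) l(2) by simp
      moreover have "Z \<subseteq> ?X"
        using T1.clades_laminar[OF X(1) Z X(2) \<open>l \<in> Z\<close>] X(3) k(2) by blast
      ultimately show False using maximal X(1,3) k(2) by blast
    qed
  next
    assume "(y, z) \<in> E\<inverse>"
    then obtain P where P: "P \<in> pairs n" "z = Inl (clade_of H1 P)" "y = Inr (clade_of H2 P)"
      by (blast elim: edgeE)
    then have "P \<subseteq> Z" using step.IH T2.clade_of_pairs(2) by fastforce
    then show ?case using P T1.clade_of_pairs(3)[OF P(1) Z] by simp
  qed
qed

text \<open>The maximal clade of each tree in a component bounds the whole component (for the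
second tree this is the first case with the trees swapped), so the two maximal clades coincide.\<close>

lemma component_common_clade:
  assumes "x \<in> V"
  obtains A where "A \<in> H1" "A \<in> H2" "(x, Inl A) \<in> conn" "(x, Inr A) \<in> conn"
proof -
  obtain P where P: "P \<in> pairs n" and x: "x = Inl (clade_of H1 P) \<or> x = Inr (clade_of H2 P)"
    using vertex_has_edge[OF assms] .
  have reach: "(x, Inl (clade_of H1 P)) \<in> conn" "(x, Inr (clade_of H2 P)) \<in> conn"
    using x conn_edge[OF P] conn_sym by auto
  let ?L = "{X \<in> H1. (x, Inl X) \<in> conn}" and ?R = "{X \<in> H2. (x, Inr X) \<in> conn}"
  have "finite ?L" "clade_of H1 P \<in> ?L"
    using T1.finite_clades reach(1) T1.clade_of_pairs(1)[OF P] by auto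
  then obtain Z where Z: "Z \<in> ?L" and maxZ: "\<forall>X\<in>?L. Z \<subseteq> X \<longrightarrow> Z = X"
    using finite_has_maximal2 by blast
  have "finite ?R" "clade_of H2 P \<in> ?R"
    using T2.finite_clades reach(2) T2.clade_of_pairs(1)[OF P] by auto
  then obtain W where W: "W \<in> ?R" and maxW: "\<forall>X\<in>?R. W \<subseteq> X \<longrightarrow> W = X"
    using finite_has_maximal2 by blast
  have xZ: "(x, Inl Z) \<in> conn" and Z1: "Z \<in> H1" using Z by auto
  have xW: "(x, Inr W) \<in> conn" and W2: "W \<in> H2" using W by auto
  have ZW: "(Inl Z, Inr W) \<in> conn" using conn_trans[OF conn_sym[OF xZ] xW] .
  have "W \<subseteq> Z"
  proof -
    have "X = Z" if "X \<in> H1" "(Inl Z, Inl X) \<in> conn" "Z \<subseteq> X" for X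
      using maxZ that conn_trans[OF xZ that(2)] by auto
    from maximal_clade_bounds_component[OF Z1 this ZW] show ?thesis by simp
  qed
  moreover have "Z \<subseteq> W"
  proof -
    have WZ: "(Inl W, Inr Z) \<in> clade_graph_conn n H2 H1"
      using conn_swap_side[OF conn_sym[OF ZW]] by simp
    have "X = W" if "X \<in> H2"
      and "(Inl W, Inl X) \<in> clade_graph_conn n H2 H1"
      and "W \<subseteq> X" for X
    proof -
      have "(Inr W, Inr X) \<in> conn"
        using two_clade_trees.conn_swap_side[OF swap_trees that(2)] by simp
      then show ?thesis using maxW that(1,3) conn_trans[OF xW] by auto
    qed
    from two_clade_trees.maximal_clade_bounds_component[OF swap_trees W2 this WZ] show ?thesis by simp
  qed
  ultimately have "Z = W" by blast
  then show thesis using that[of Z] Z1 W2 xZ xW by simp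
qed

lemma num_components_eq: "num_components V E = card (H1 \<inter> H2)"
proof -
  have "bij_betw (\<lambda>A. conn `` {Inl A}) (H1 \<inter> H2) (V // conn)"
  proof (rule bij_betwI')
    fix A B assume "A \<in> H1 \<inter> H2" "B \<in> H1 \<inter> H2"
    show "(conn `` {Inl A} = conn `` {Inl B}) = (A = B)"
    proof
      assume "conn `` {Inl A} = conn `` {Inl B}"
      then have "(Inl A, Inl B) \<in> conn" by blast
      then show "A = B"
        using common_clades_conn_eq[of A B "Inl A" "Inl B"] \<open>A \<in> H1 \<inter> H2\<close> \<open>B \<in> H1 \<inter> H2\<close> by simp
    qed simp
  next
    fix A assume "A \<in> H1 \<inter> H2"
    then show "conn `` {Inl A} \<in> V // conn"
      unfolding quotient_def clade_graph_vertices_def by blast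
  next
    fix K assume "K \<in> V // conn"
    then obtain x where x: "x \<in> V" "K = conn `` {x}" unfolding quotient_def by blast
    obtain A where "A \<in> H1" "A \<in> H2" "(x, Inl A) \<in> conn"
      using component_common_clade[OF x(1)] by blast
    then show "\<exists>A\<in>H1 \<inter> H2. K = conn `` {Inl A}"
      using x conn_Image_eq by blast
  qed
  then show ?thesis unfolding num_components_def by (rule bij_betw_same_card[symmetric])
qed

lemma card_vertices: "card V = card H1 + card H2"
  unfolding clade_graph_vertices_def
  by (subst card_Un_disjoint) (auto simp: T1.finite_clades T2.finite_clades card_image)

lemma graphic_rank_eq: "graphic_rank V E = card (H1 \<union> H2)"
  using card_vertices num_components_eq card_Un_Int[OF T1.finite_clades T2.finite_clades]
  unfolding graphic_rank_def by simp

end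

section \<open>Spanning sets of the ultrametric cones\<close>

definition clade_weighting :: "nat \<Rightarrow> nat set set \<Rightarrow> (nat set \<Rightarrow> real) \<Rightarrow> nat set \<Rightarrow> real" where
  "clade_weighting n H w P = (if P \<in> pairs n then w (clade_of H P) else 0)"

definition clade_indicator :: "nat \<Rightarrow> nat set set \<Rightarrow> nat set \<Rightarrow> nat set \<Rightarrow> real" where
  "clade_indicator n H C = clade_weighting n H (\<lambda>D. if D = C then 1 else 0)"

lemma ultra_cone_eq: "ultra_cone n H = clade_weighting n H ` {w. mono_on H w}"
proof (intro equalityI subsetI)
  fix \<delta> assume "\<delta> \<in> ultra_cone n H"
  then obtain w where zero: "\<forall>P. P \<notin> pairs n \<longrightarrow> \<delta> P = 0"
    and mono: "\<forall>C\<in>H. \<forall>D\<in>H. C \<subseteq> D \<longrightarrow> w C \<le> w D"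
    and pair: "\<forall>u\<in>{1..n}. \<forall>v\<in>{1..n}. u \<noteq> v \<longrightarrow> \<delta> {u, v} = w (clade_of H {u, v})"
    unfolding ultra_cone_def by blast
  have "\<delta> P = clade_weighting n H w P" for P
  proof (cases "P \<in> pairs n")
    case True
    then obtain u v where "u \<in> {1..n}" "v \<in> {1..n}" "u \<noteq> v" "P = {u, v}"
      unfolding pairs_iff by blast
    then show ?thesis using True pair by (simp add: clade_weighting_def)
  next
    case False
    then show ?thesis using zero by (simp add: clade_weighting_def)
  qed
  then show "\<delta> \<in> clade_weighting n H ` {w. mono_on H w}"
    using mono by (auto simp: monotone_on_def fun_eq_iff)
next
  fix \<delta> assume "\<delta> \<in> clade_weighting n H ` {w. mono_on H w}"
  then obtain w where \<delta>: "\<delta> = clade_weighting n H w" and mono: "mono_on H w"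
    by blast
  show "\<delta> \<in> ultra_cone n H"
    unfolding ultra_cone_def \<delta> using mono unfolding monotone_on_def
    by (intro CollectI conjI exI[of _ w]) (simp_all add: clade_weighting_def doubleton_in_pairs)
qed

lemma clade_weighting_in_ultra_cone: "mono_on H w \<Longrightarrow> clade_weighting n H w \<in> ultra_cone n H"
  unfolding ultra_cone_eq by blast

lemma zero_in_ultra_cone: "0 \<in> ultra_cone n H"
proof -
  have "clade_weighting n H (\<lambda>_. 0) = 0" by (simp add: fun_eq_iff clade_weighting_def)
  then show ?thesis using clade_weighting_in_ultra_cone[of H "\<lambda>_. 0" n] by (simp add: monotone_on_def)
qed

lemma clade_indicator_eq_diff:
  "clade_indicator n H C =
     clade_weighting n H (\<lambda>D. if C \<subseteq> D then 1 else 0) - clade_weighting n H (\<lambda>D. if C \<subset> D then 1 else 0)"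
  by (auto simp: fun_eq_iff clade_indicator_def clade_weighting_def)

lemma sum_clade_indicator:
  assumes "finite F"
  shows "(\<Sum>C\<in>F. (\<lambda>P. w C * clade_indicator n H C P)) = clade_weighting n H (\<lambda>D. if D \<in> F then w D else 0)"
  using assms by (simp add: fun_eq_iff sum_fun_apply clade_indicator_def clade_weighting_def
      if_distrib[of "\<lambda>y. _ * y"] cong: if_cong)

context clade_tree
begin

lemma clade_weighting_eq_sum: "clade_weighting n H w = (\<Sum>C\<in>H. (\<lambda>P. w C * clade_indicator n H C P))"
  unfolding sum_clade_indicator[OF finite_clades]
  by (simp add: fun_eq_iff clade_weighting_def clade_of_pairs(1))

lemma span_ultra_cone: "fun_space.span (ultra_cone n H) = fun_space.span (clade_indicator n H ` H)"
proof (rule fun_space.span_eq[THEN iffD2], intro conjI subsetI)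
  fix \<delta> assume "\<delta> \<in> ultra_cone n H"
  then obtain w where \<delta>: "\<delta> = clade_weighting n H w" unfolding ultra_cone_eq by blast
  have "(\<Sum>C\<in>H. (\<lambda>P. w C * clade_indicator n H C P)) \<in> fun_space.span (clade_indicator n H ` H)"
    by (intro fun_space.span_sum fun_space.span_scale) (auto intro: fun_space.span_base)
  then show "\<delta> \<in> fun_space.span (clade_indicator n H ` H)"
    unfolding \<delta> clade_weighting_eq_sum .
next
  fix f assume "f \<in> clade_indicator n H ` H"
  then obtain C where f: "f = clade_indicator n H C" by blast
  show "f \<in> fun_space.span (ultra_cone n H)"
    unfolding f clade_indicator_eq_diff
    by (rule fun_space.span_diff; rule fun_space.span_base, rule clade_weighting_in_ultra_cone)
      (auto simp: monotone_on_def)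
qed

end

section \<open>A basis of the span of the Minkowski sum\<close>

text \<open>Edges of the clade graph are indexed by pairs, so clade_indicator n H1 C is the incidence
vector of the vertex Inl C.\<close>

definition vertex_incidence :: "nat \<Rightarrow> nat set set \<Rightarrow> nat set set \<Rightarrow> nat set + nat set \<Rightarrow> nat set \<Rightarrow> real" where
  "vertex_incidence n H1 H2 v =
     (case v of Inl C \<Rightarrow> clade_indicator n H1 C | Inr D \<Rightarrow> clade_indicator n H2 D)"

lemma vertex_incidence_apply:
  "vertex_incidence n H1 H2 v P =
     (if P \<in> pairs n
      then (if v = Inl (clade_of H1 P) then 1 else 0) + (if v = Inr (clade_of H2 P) then 1 else 0)
      else 0)"
  by (cases v) (auto simp: vertex_incidence_def clade_indicator_def clade_weighting_def)

lemma sum_vertex_incidence_apply: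
  assumes "finite U"
  shows "(\<Sum>v\<in>U. (\<lambda>Q. c v * vertex_incidence n H1 H2 v Q)) P =
     (if P \<in> pairs n
      then (if Inl (clade_of H1 P) \<in> U then c (Inl (clade_of H1 P)) else 0)
         + (if Inr (clade_of H2 P) \<in> U then c (Inr (clade_of H2 P)) else 0)
      else 0)"
  using assms by (simp add: sum_fun_apply vertex_incidence_apply distrib_left sum.distrib
      if_distrib[of "\<lambda>y. _ * y"] cong: if_cong)

definition side_sign :: "'a + 'a \<Rightarrow> real" where
  "side_sign v = (case v of Inl _ \<Rightarrow> 1 | Inr _ \<Rightarrow> -1)"

context two_clade_trees
begin

abbreviation "incidence \<equiv> vertex_incidence n H1 H2"
text \<open>One vertex is dropped from each component: the right copy of its common clade.\<close>

abbreviation "basis_vertices \<equiv> V - Inr ` (H1 \<inter> H2)"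

lemma finite_vertices: "finite V"
  by (simp add: clade_graph_vertices_def T1.finite_clades T2.finite_clades)

lemma span_minkowski_ultra_cones:
  "fun_space.span (minkowski_sum (ultra_cone n H1) (ultra_cone n H2)) = fun_space.span (incidence ` V)"
proof -
  have "incidence ` V = clade_indicator n H1 ` H1 \<union> clade_indicator n H2 ` H2"
    unfolding clade_graph_vertices_def image_Un image_image by (simp add: vertex_incidence_def)
  then show ?thesis
    by (simp add: span_minkowski_sum zero_in_ultra_cone fun_space.span_Un
        T1.span_ultra_cone T2.span_ultra_cone)
qed

lemma signed_incidence_sum_component:
  assumes "x \<in> V"
  shows "(\<Sum>v\<in>conn `` {x}. (\<lambda>P. side_sign v * incidence v P)) = 0"
proof
  fix P
  have "conn `` {x} \<subseteq> V" using conn_in_vertices assms by blast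
  then have fin: "finite (conn `` {x})" using finite_vertices finite_subset by blast
  have "Inl (clade_of H1 P) \<in> conn `` {x} \<longleftrightarrow> Inr (clade_of H2 P) \<in> conn `` {x}" if "P \<in> pairs n"
    using conn_trans[OF _ conn_edge[OF that]] conn_trans[OF _ conn_sym[OF conn_edge[OF that]]]
    by blast
  then show "(\<Sum>v\<in>conn `` {x}. (\<lambda>P. side_sign v * incidence v P)) P = 0 P"
    by (simp add: sum_vertex_incidence_apply[OF fin] side_sign_def)
qed

lemma incidence_common_clade_in_span:
  assumes A: "A \<in> H1" "A \<in> H2"
  shows "incidence (Inr A) \<in> fun_space.span (incidence ` basis_vertices)"
proof -
  let ?K = "conn `` {Inl A}"
  let ?S = "\<Sum>v\<in>?K - {Inr A}. (\<lambda>P. side_sign v * incidence v P)"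
  have AV: "Inl A \<in> V" using A by (simp add: clade_graph_vertices_def)
  have KV: "?K \<subseteq> V" using conn_in_vertices AV by blast
  then have fin: "finite ?K" using finite_vertices finite_subset by blast
  have "Inr A \<in> ?K"
  proof -
    obtain A' where A': "A' \<in> H1" "A' \<in> H2" "(Inl A, Inl A') \<in> conn" "(Inl A, Inr A') \<in> conn"
      using component_common_clade[OF AV] by blast
    have "A = A'" using common_clades_conn_eq[OF A A'(1,2) A'(3)] by simp
    then show ?thesis using A'(4) by simp
  qed
  have "?K - {Inr A} \<subseteq> basis_vertices"
  proof
    fix v assume v: "v \<in> ?K - {Inr A}"
    have "v \<notin> Inr ` (H1 \<inter> H2)"
    proof
      assume "v \<in> Inr ` (H1 \<inter> H2)"
      then obtain D where D: "D \<in> H1" "D \<in> H2" "v = Inr D" by blast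
      then have "A = D" using common_clades_conn_eq[OF A D(1,2), of "Inl A" v] v by simp
      then show False using v D(3) by simp
    qed
    then show "v \<in> basis_vertices" using v KV by blast
  qed
  then have "?S \<in> fun_space.span (incidence ` basis_vertices)"
    by (intro fun_space.span_sum fun_space.span_scale) (auto intro: fun_space.span_base)
  moreover have "incidence (Inr A) = ?S"
  proof -
    have "(\<lambda>P. side_sign (Inr A) * incidence (Inr A) P) = - incidence (Inr A)"
      by (simp add: side_sign_def fun_eq_iff)
    then have "- incidence (Inr A) + ?S = (\<Sum>v\<in>?K. (\<lambda>P. side_sign v * incidence v P))"
      using sum.remove[OF fin \<open>Inr A \<in> ?K\<close>, where g = "\<lambda>v P. side_sign v * incidence v P"]
      by simp
    also have "\<dots> = 0" using signed_incidence_sum_component[OF AV] .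
    finally show ?thesis using minus_unique by fastforce
  qed
  ultimately show ?thesis by simp
qed

lemma span_basis_vertices: "fun_space.span (incidence ` basis_vertices) = fun_space.span (incidence ` V)"
proof (rule fun_space.span_eq[THEN iffD2], intro conjI subsetI)
  fix f assume "f \<in> incidence ` basis_vertices"
  then show "f \<in> fun_space.span (incidence ` V)" by (blast intro: fun_space.span_base)
next
  fix f assume "f \<in> incidence ` V"
  then obtain v where v: "v \<in> V" "f = incidence v" by blast
  show "f \<in> fun_space.span (incidence ` basis_vertices)"
  proof (cases "v \<in> Inr ` (H1 \<inter> H2)")
    case True
    then show ?thesis using v incidence_common_clade_in_span by blast
  next
    case False
    then show ?thesis using v by (blast intro: fun_space.span_base)
  qed
qed

text \<open>A vanishing combination gives, after flipping the sign on the right side, a weighting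
of the vertices that agrees at the two ends of every edge; it vanishes at the removed common
clade of each component, hence everywhere.\<close>

lemma basis_vertices_scalars_zero:
  assumes sum0: "(\<Sum>v\<in>basis_vertices. (\<lambda>P. c v * incidence v P)) = 0"
    and u: "u \<in> basis_vertices"
  shows "c u = 0"
proof -
  define \<sigma> where "\<sigma> v = (if v \<in> basis_vertices then side_sign v * c v else 0)" for v
  have fin: "finite basis_vertices" using finite_vertices by simp
  have edge_invariant: "\<sigma> x = \<sigma> y" if xy: "(x, y) \<in> E" for x y
  proof -
    obtain P where P: "P \<in> pairs n" "x = Inl (clade_of H1 P)" "y = Inr (clade_of H2 P)"
      using xy by (rule edgeE)
    have x: "x \<in> basis_vertices"
      using P T1.clade_of_pairs(1) by (auto simp: clade_graph_vertices_def)
    have "(\<Sum>v\<in>basis_vertices. (\<lambda>P. c v * incidence v P)) P = 0" using sum0 by simp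
    then have "c x + (if y \<in> basis_vertices then c y else 0) = 0"
      unfolding sum_vertex_incidence_apply[OF fin] P(2,3)[symmetric] using P(1) x by simp
    moreover have "side_sign x = 1" "side_sign y = -1" using P(2,3) by (simp_all add: side_sign_def)
    ultimately show ?thesis using x unfolding \<sigma>_def by auto
  qed
  obtain A where A: "A \<in> H1" "A \<in> H2" "(u, Inr A) \<in> conn"
    using component_common_clade u by blast
  have "\<sigma> u = \<sigma> (Inr A)" by (rule symcl_rtrancl_invariant[OF edge_invariant A(3)])
  also have "\<sigma> (Inr A) = 0" using A by (simp add: \<sigma>_def)
  finally show "c u = 0" using u by (cases u) (simp_all add: \<sigma>_def side_sign_def)
qed

lemma cone_dim_eq_card_basis_vertices:
  "cone_dim (minkowski_sum (ultra_cone n H1) (ultra_cone n H2)) = card basis_vertices"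
proof -
  have fin: "finite basis_vertices" using finite_vertices by simp
  have inj: "inj_on incidence basis_vertices"
    by (rule fun_space.independent_image_if_scalars_zero(1)[OF fin]) (rule basis_vertices_scalars_zero)
  have independent: "fun_space.independent (incidence ` basis_vertices)"
    by (rule fun_space.independent_image_if_scalars_zero(2)[OF fin]) (rule basis_vertices_scalars_zero)
  have "cone_dim (minkowski_sum (ultra_cone n H1) (ultra_cone n H2))
      = fun_space.dim (minkowski_sum (ultra_cone n H1) (ultra_cone n H2))"
    unfolding cone_dim_def ..
  also have "\<dots> = card (incidence ` basis_vertices)"
    using span_basis_vertices span_minkowski_ultra_cones independent
    by (intro fun_space.dim_eq_card) simp_all
  also have "\<dots> = card basis_vertices" using card_image[OF inj] .
  finally show ?thesis .
qed

lemma card_basis_vertices: "card basis_vertices = graphic_rank V E"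
proof -
  have "card basis_vertices = card V - card (Inr ` (H1 \<inter> H2) :: (nat set + nat set) set)"
    using finite_vertices
    by (intro card_Diff_subset) (auto simp: clade_graph_vertices_def T1.finite_clades)
  then show ?thesis
    unfolding graphic_rank_def num_components_eq by (simp add: card_image)
qed

end

theorem proposition3p7:
  fixes n :: nat and H1 H2 :: "nat set set"
  assumes "rooted_tree n H1" and "rooted_tree n H2"
  shows "cone_dim (minkowski_sum (ultra_cone n H1) (ultra_cone n H2))
           = graphic_rank (clade_graph_vertices H1 H2) (clade_graph_edges n H1 H2)
       \<and> graphic_rank (clade_graph_vertices H1 H2) (clade_graph_edges n H1 H2)
           = card (H1 \<union> H2)"
proof -
  interpret two_clade_trees n H1 H2
    using assms by (simp add: two_clade_trees_def clade_tree_def)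
  show ?thesis
    using cone_dim_eq_card_basis_vertices card_basis_vertices graphic_rank_eq by simp
qed

end
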